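(* Let $\mathcal{M}$, $f,h_1,h_2,\psi$ be as in the context, and let $\{(x_k,y_k,z_k,\lambda_k,\gamma_k,\sigma_k)\}$ be any sequence generated by Algorithm ALM described in the context (i.e., at every iteration a point $x_k$ satisfying the subproblem conditions is found). Then $$\lim_{k\to\infty}\big(\|h_1(x_k)-y_k\|_2+\|h_2(x_k)-z_k\|_2\big)=0.$$ Consequently, if $x_*\in\mathcal{M}$ is an accumulation point of $\{x_k\}$, then $(x_*,h_1(x_* ),h_2(x_* ))$ is a feasible accumulation point of $\{(x_k,y_k,z_k)\}$ (feasible meaning $h_2(x_* )\le 0$). Moreover, $\{x_k\}$ always has an accumulation point if $\mathcal{M}$ is compact.
   Context: Standing assumptions: $\mathcal{M}$ is a complete smooth Riemannian manifold; $f:\mathcal{M}\to\mathbb{R}$, $h_1:\mathcal{M}\to\mathbb{R}^m$, $h_2:\mathcal{M}\to\mathbb{R}^q$ are continuously differentiable; $\psi:\mathbb{R}^m\to\mathbb{R}$ is convex; and $f(x)+\psi(y)$ is bounded below on $\mathcal{M}\times\mathbb{R}^m$. The problem is $\min\{f(x)+\psi(h_1(x))\}$ s.t. $x\in\mathcal{M}$, $h_2(x)\le 0$, reformulated as $\min f(x)+\psi(y)$ s.t. $x\in\mathcal{M}$, $y=h_1(x)$, $z=h_2(x)$, $z\le 0$. For a closed proper convex $g$ on $\mathbb{R}^n$ and $\sigma>0$: $g^\sigma(u):=\min_w\{g(w)+\frac{\sigma}{2}\|u-w\|_2^2\}$ (Moreau–Yosida regularization) and $\mathrm{prox}_{g/\sigma}(u):=\arg\min_w\{g(w)+\frac{\sigma}{2}\|u-w\|_2^2\}$.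 $\delta_{\mathbb{R}^q_-}$ is the indicator of $\mathbb{R}^q_-=\{z\le 0\}$ and $\Pi_{\mathbb{R}^q_-}$ the Euclidean projection onto it. The augmented Lagrangian is $L_\sigma(x,y,z,\lambda,\gamma)=f(x)+\psi(y)+\frac{\sigma}{2}\|h_1(x)-y+\lambda/\sigma\|_2^2+\frac{\sigma}{2}\|h_2(x)-z+\gamma/\sigma\|_2^2-\frac{\|\lambda\|_2^2+\|\gamma\|_2^2}{2\sigma}$. Algorithm ALM: choose $x_0\in\mathcal{M}$, $\gamma_0\in\mathbb{R}^q_+$, $\lambda_0\in\mathbb{R}^m$, $\sigma_0>0$, $\alpha,\tau\in(0,1)$, $\rho>1$, and a sequence $\varepsilon_k\ge 0$ with $\varepsilon_k\to 0$. Let $y_0=\mathrm{prox}_{\psi/\sigma_0}(h_1(x_0)+\lambda_0/\sigma_0)$, $z_0=\Pi_{\mathbb{R}^q_-}(h_2(x_0)+\gamma_0/\sigma_0)$, $\delta_0=\max\{\|h_1(x_0)-y_0\|_2,\|h_2(x_0)-z_0\|_2\}$. Choose a feasible $x_{\rm feas}\in\mathcal{M}$ ($h_2(x_{\rm feas})\le0$) and $\Phi\ge\max\{f(x_{\rm feas})+\psi(h_1(x_{\rm feas})),L_{\sigma_0}(x_0,y_0,z_0,\lambda_0,\gamma_0)\}$. For $k=1,2,\dots$ (with current values $\lambda_k,\gamma_k,\sigma_k$; at $k=1$ these are $\lambda_0,\gamma_0,\sigma_0$): (i) find $x_k\in\mathcal{M}$ with $\|\mathrm{grad}\,L_k(x_k)\|<\varepsilon_k$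 and $L_k(x_k)\le\Phi$, where $L_k(x)=f(x)+\psi^{\sigma_k}(h_1(x)+\lambda_k/\sigma_k)+\delta^{\sigma_k}_{\mathbb{R}^q_-}(h_2(x)+\gamma_k/\sigma_k)$ and $\mathrm{grad}$ is the Riemannian gradient; (ii) $y_k=\mathrm{prox}_{\psi/\sigma_k}(h_1(x_k)+\lambda_k/\sigma_k)$, $z_k=\Pi_{\mathbb{R}^q_-}(h_2(x_k)+\gamma_k/\sigma_k)$; (iii) $\lambda_{k+1}=\lambda_k+\sigma_k(h_1(x_k)-y_k)$, $\gamma_{k+1}=\gamma_k+\sigma_k(h_2(x_k)-z_k)$; (iv) $\delta_k=\max\{\|h_1(x_k)-y_k\|_2,\|h_2(x_k)-z_k\|_2\}$; if $\delta_k\le\tau\delta_{k-1}$ then $\sigma_{k+1}=\sigma_k$, otherwise $\sigma_{k+1}=\max\{\rho\sigma_k,\|\lambda_{k+1}\|_2^{1+\alpha},\|\gamma_{k+1}\|_2^{1+\alpha}\}$. *)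

theory Defs
  imports "HOL-Analysis.Analysis"
begin

definition nonpos_orthant :: "(real^'q) set" where
  "nonpos_orthant = {z. \<forall>i. z $ i \<le> 0}"

text \<open>Moreau-Yosida regularization of a closed proper convex function whose effective
  domain is C (g is +infinity outside C, so the minimum ranges over C):
  g^sigma(u) = min_w { g w + sigma/2 * norm(u - w)^2 }.
  For psi (real valued) C = UNIV; for the indicator of R^q_- take C = nonpos_orthant, g = 0.\<close>
definition moreau_env :: "'n::real_normed_vector set \<Rightarrow> ('n \<Rightarrow> real) \<Rightarrow> real \<Rightarrow> 'n \<Rightarrow> real" where
  "moreau_env C g \<sigma> u = (INF w\<in>C. g w + \<sigma> / 2 * (norm (u - w))\<^sup>2)"

definition prox :: "'n::real_normed_vector set \<Rightarrow> ('n \<Rightarrow> real) \<Rightarrow> real \<Rightarrow> 'n \<Rightarrow> 'n" where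
  "prox C g \<sigma> u = (THE w. w \<in> C \<and>
      (\<forall>v\<in>C. g w + \<sigma> / 2 * (norm (u - w))\<^sup>2 \<le> g v + \<sigma> / 2 * (norm (u - v))\<^sup>2))"

definition aug_lag ::
  "('a \<Rightarrow> real) \<Rightarrow> (real^'m \<Rightarrow> real) \<Rightarrow> ('a \<Rightarrow> real^'m) \<Rightarrow> ('a \<Rightarrow> real^'q)
    \<Rightarrow> real \<Rightarrow> 'a \<Rightarrow> real^'m \<Rightarrow> real^'q \<Rightarrow> real^'m \<Rightarrow> real^'q \<Rightarrow> real" where
  "aug_lag f \<psi> h1 h2 \<sigma> x y z lm gm =
     f x + \<psi> y + \<sigma> / 2 * (norm (h1 x - y + lm /\<^sub>R \<sigma>))\<^sup>2
       + \<sigma> / 2 * (norm (h2 x - z + gm /\<^sub>R \<sigma>))\<^sup>2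
       - ((norm lm)\<^sup>2 + (norm gm)\<^sup>2) / (2 * \<sigma>)"

definition sub_obj ::
  "('a \<Rightarrow> real) \<Rightarrow> (real^'m \<Rightarrow> real) \<Rightarrow> ('a \<Rightarrow> real^'m) \<Rightarrow> ('a \<Rightarrow> real^'q)
    \<Rightarrow> real \<Rightarrow> real^'m \<Rightarrow> real^'q \<Rightarrow> 'a \<Rightarrow> real" where
  "sub_obj f \<psi> h1 h2 \<sigma> lm gm x =
     f x + moreau_env UNIV \<psi> \<sigma> (h1 x + lm /\<^sub>R \<sigma>)
         + moreau_env nonpos_orthant (\<lambda>_. 0) \<sigma> (h2 x + gm /\<^sub>R \<sigma>)"

definition acc_point :: "(nat \<Rightarrow> 'a::topological_space) \<Rightarrow> 'a \<Rightarrow> bool" where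
  "acc_point s l \<longleftrightarrow> (\<exists>r. strict_mono r \<and> (s \<circ> r) \<longlonglongrightarrow> l)"

end

theory Submission
  imports Defs
begin

text \<open>
  Since the Moreau envelopes in L_k are attained at y_k and z_k, one has
  L_k(x_k) = f(x_k) + psi(y_k) + (norm lambda_(k+1)^2 + norm gamma_(k+1)^2) / (2 sigma_k).
  With L_k(x_k) \<le> Phi and f + psi \<ge> B the updated multipliers are O(sqrt sigma_k), and since
  sigma_k times the residual is the multiplier increment and sigma is nondecreasing, the residual
  is O(1 / sqrt sigma_k). Hence it vanishes if sigma_k \<rightarrow> \<infinity>. Otherwise sigma converges, so
  it is eventually never multiplied by rho, and the update rule then forces
  delta_k \<le> tau delta_(k-1): the residual converges linearly. The statements about accumulation
  points follow from continuity of h_1, h_2 and closedness of the orthant.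
\<close>

lemma norm_midpoint_sq:
  fixes a b :: "'a::real_inner"
  shows "(norm ((1/2) *\<^sub>R a + (1/2) *\<^sub>R b))\<^sup>2
           = ((norm a)\<^sup>2 + (norm b)\<^sup>2) / 2 - (norm (a - b))\<^sup>2 / 4"
  by (simp add: power2_norm_eq_inner inner_add_left inner_add_right inner_diff_left
      inner_diff_right inner_commute algebra_simps) (simp add: field_simps)

lemma prox_objective_has_minimizer:
  fixes g :: "'a::euclidean_space \<Rightarrow> real"
  assumes cont: "continuous_on UNIV g" and bdd: "bdd_below (range g)" and "\<sigma> > 0"
  shows "\<exists>w. \<forall>v. g w + \<sigma>/2 * (norm (u - w))\<^sup>2 \<le> g v + \<sigma>/2 * (norm (u - v))\<^sup>2"
proof -
  define G where "G w = g w + \<sigma>/2 * (norm (u - w))\<^sup>2" for w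
  obtain b where b: "\<And>v. b \<le> g v" using bdd by (auto simp: bdd_below_def)
  define R where "R = sqrt (2 * (g u - b) / \<sigma>)"
  have "0 \<le> R" unfolding R_def using b \<open>\<sigma> > 0\<close> by (simp add: less_imp_le)
  have "continuous_on (cball u R) G" unfolding G_def
    by (intro continuous_intros continuous_on_subset[OF cont]) auto
  moreover have "cball u R \<noteq> {}" using \<open>0 \<le> R\<close> by simp
  ultimately obtain w where wmin: "\<And>v. v \<in> cball u R \<Longrightarrow> G w \<le> G v"
    using continuous_attains_inf[OF compact_cball] by blast
  have "G w \<le> G v" for v
  proof (cases "v \<in> cball u R")
    case False
    \<comment> \<open>outside the ball the quadratic term alone exceeds g u - b\<close>
    then have "R\<^sup>2 < (norm (u - v))\<^sup>2"
      using \<open>0 \<le> R\<close> by (simp add: dist_norm power_strict_mono)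
    moreover have "R\<^sup>2 = 2 * (g u - b) / \<sigma>" unfolding R_def using b \<open>\<sigma> > 0\<close> by simp
    ultimately have "g u - b < \<sigma>/2 * (norm (u - v))\<^sup>2" using \<open>\<sigma> > 0\<close> by (simp add: field_simps)
    then have "G u < G v" using b[of v] unfolding G_def by simp
    moreover have "G w \<le> G u" using wmin \<open>0 \<le> R\<close> by simp
    ultimately show ?thesis by linarith
  qed (use wmin in blast)
  then show ?thesis unfolding G_def by blast
qed

lemma prox_objective_minimizer_unique:
  fixes g :: "'a::real_inner \<Rightarrow> real"
  assumes cvx: "convex_on UNIV g" and "\<sigma> > 0"
    and w: "\<forall>v. g w + \<sigma>/2 * (norm (u - w))\<^sup>2 \<le> g v + \<sigma>/2 * (norm (u - v))\<^sup>2"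
    and w': "\<forall>v. g w' + \<sigma>/2 * (norm (u - w'))\<^sup>2 \<le> g v + \<sigma>/2 * (norm (u - v))\<^sup>2"
  shows "w' = w"
proof (rule ccontr)
  assume "w' \<noteq> w"
  define m where "m = (1/2) *\<^sub>R w + (1/2) *\<^sub>R w'"
  have "g m \<le> g w / 2 + g w' / 2"
    unfolding m_def using convex_onD[OF cvx, of "1/2" w w'] by simp
  moreover have "u - m = (1/2) *\<^sub>R (u - w) + (1/2) *\<^sub>R (u - w')"
    unfolding m_def by (simp add: algebra_simps flip: scaleR_add_right)
  then have mid: "(norm (u - m))\<^sup>2
      = ((norm (u - w))\<^sup>2 + (norm (u - w'))\<^sup>2) / 2 - (norm (w' - w))\<^sup>2 / 4"
    using norm_midpoint_sq[of "u - w" "u - w'"] by simp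
  then have "\<sigma>/2 * (norm (u - m))\<^sup>2
      = (\<sigma>/2 * (norm (u - w))\<^sup>2 + \<sigma>/2 * (norm (u - w'))\<^sup>2) / 2 - \<sigma>/8 * (norm (w' - w))\<^sup>2"
    unfolding mid by (simp add: algebra_simps)
  moreover have "\<sigma>/8 * (norm (w' - w))\<^sup>2 > 0" using \<open>w' \<noteq> w\<close> \<open>\<sigma> > 0\<close> by simp
  moreover have "g w + \<sigma>/2 * (norm (u - w))\<^sup>2 \<le> g m + \<sigma>/2 * (norm (u - m))\<^sup>2"
    and "g w' + \<sigma>/2 * (norm (u - w'))\<^sup>2 \<le> g m + \<sigma>/2 * (norm (u - m))\<^sup>2"
    using w w' by auto
  ultimately show False by argo
qed

lemma prox_minimizes:
  fixes \<psi> :: "'a::euclidean_space \<Rightarrow> real"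
  assumes cvx: "convex_on UNIV \<psi>" and "bdd_below (range \<psi>)" and "\<sigma> > 0"
  shows "\<psi> (prox UNIV \<psi> \<sigma> u) + \<sigma>/2 * (norm (u - prox UNIV \<psi> \<sigma> u))\<^sup>2
           \<le> \<psi> v + \<sigma>/2 * (norm (u - v))\<^sup>2"
proof -
  obtain w where w: "\<forall>v. \<psi> w + \<sigma>/2 * (norm (u - w))\<^sup>2 \<le> \<psi> v + \<sigma>/2 * (norm (u - v))\<^sup>2"
    using prox_objective_has_minimizer[OF convex_on_continuous[OF open_UNIV cvx] assms(2,3)] by blast
  have "prox UNIV \<psi> \<sigma> u = w"
    unfolding prox_def
  proof (rule the_equality)
    fix w'
    assume "w' \<in> UNIV \<and> (\<forall>v\<in>UNIV. \<psi> w' + \<sigma>/2 * (norm (u - w'))\<^sup>2 \<le> \<psi> v + \<sigma>/2 * (norm (u - v))\<^sup>2)"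
    then show "w' = w" using prox_objective_minimizer_unique[OF cvx \<open>\<sigma> > 0\<close> w] by simp
  qed (use w in simp)
  then show ?thesis using w by simp
qed

lemma moreau_env_eq_minimum:
  fixes g :: "'a::real_normed_vector \<Rightarrow> real"
  assumes "w \<in> C"
    and "\<forall>v\<in>C. g w + \<sigma>/2 * (norm (u - w))\<^sup>2 \<le> g v + \<sigma>/2 * (norm (u - v))\<^sup>2"
  shows "moreau_env C g \<sigma> u = g w + \<sigma>/2 * (norm (u - w))\<^sup>2"
  unfolding moreau_env_def using assms by (intro cInf_eq_minimum) auto

lemma moreau_env_prox:
  fixes \<psi> :: "'a::euclidean_space \<Rightarrow> real"
  assumes "convex_on UNIV \<psi>" "bdd_below (range \<psi>)" "\<sigma> > 0"
  shows "moreau_env UNIV \<psi> \<sigma> u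
           = \<psi> (prox UNIV \<psi> \<sigma> u) + \<sigma>/2 * (norm (u - prox UNIV \<psi> \<sigma> u))\<^sup>2"
  using prox_minimizes[OF assms] by (intro moreau_env_eq_minimum) auto

lemma moreau_env_indicator:
  fixes C :: "'a::euclidean_space set"
  assumes "closed C" "C \<noteq> {}" "\<sigma> \<ge> 0"
  shows "moreau_env C (\<lambda>_. 0) \<sigma> u = \<sigma>/2 * (norm (u - closest_point C u))\<^sup>2"
proof -
  have "\<forall>v\<in>C. 0 + \<sigma>/2 * (norm (u - closest_point C u))\<^sup>2 \<le> 0 + \<sigma>/2 * (norm (u - v))\<^sup>2"
    using closest_point_le[OF \<open>closed C\<close>, of _ u] \<open>\<sigma> \<ge> 0\<close>
    by (auto simp: dist_norm intro!: mult_left_mono power_mono)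
  then show ?thesis
    using moreau_env_eq_minimum[of "closest_point C u" C "\<lambda>_. 0"] closest_point_in_set[OF assms(1,2)]
    by simp
qed

lemma closed_nonpos_orthant: "closed nonpos_orthant"
  unfolding nonpos_orthant_def by (intro closed_Collect_all closed_halfspace_component_le_cart)

lemma nonpos_orthant_nonempty: "nonpos_orthant \<noteq> {}"
  by (auto simp: nonpos_orthant_def intro!: exI[of _ 0])

lemma sub_obj_at_prox_closest_point:
  fixes \<psi> :: "real^'m \<Rightarrow> real" and h :: "'a \<Rightarrow> real^'m" and g :: "'a \<Rightarrow> real^'q"
  assumes "convex_on UNIV \<psi>" "bdd_below (range \<psi>)" "\<sigma> > 0"
    and y: "y = prox UNIV \<psi> \<sigma> (h x + lm /\<^sub>R \<sigma>)"
    and z: "z = closest_point nonpos_orthant (g x + gm /\<^sub>R \<sigma>)"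
  shows "sub_obj f \<psi> h g \<sigma> lm gm x
           = f x + \<psi> y + (norm (lm + \<sigma> *\<^sub>R (h x - y), gm + \<sigma> *\<^sub>R (g x - z)))\<^sup>2 / (2 * \<sigma>)"
proof -
  have shift: "\<sigma>/2 * (norm (a + b /\<^sub>R \<sigma> - c))\<^sup>2 = (norm (b + \<sigma> *\<^sub>R (a - c)))\<^sup>2 / (2 * \<sigma>)"
    for a b c :: "'v::real_normed_vector"
  proof -
    have "b + \<sigma> *\<^sub>R (a - c) = \<sigma> *\<^sub>R (a + b /\<^sub>R \<sigma> - c)"
      using \<open>\<sigma> > 0\<close> by (simp add: algebra_simps)
    then show ?thesis using \<open>\<sigma> > 0\<close> by (simp add: power_mult_distrib power2_eq_square)
  qed
  have "moreau_env UNIV \<psi> \<sigma> (h x + lm /\<^sub>R \<sigma>)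
      = \<psi> y + \<sigma>/2 * (norm (h x + lm /\<^sub>R \<sigma> - y))\<^sup>2"
    using moreau_env_prox[OF assms(1-3)] y by simp
  moreover have "moreau_env nonpos_orthant (\<lambda>_. 0) \<sigma> (g x + gm /\<^sub>R \<sigma>)
      = \<sigma>/2 * (norm (g x + gm /\<^sub>R \<sigma> - z))\<^sup>2"
    unfolding z
    by (rule moreau_env_indicator[OF closed_nonpos_orthant nonpos_orthant_nonempty less_imp_le[OF \<open>\<sigma> > 0\<close>]])
  ultimately show ?thesis
    unfolding sub_obj_def shift norm_Pair by (simp add: add_divide_distrib)
qed

lemma updated_multiplier_norm_sq_le:
  fixes \<psi> :: "real^'m \<Rightarrow> real" and h :: "'a \<Rightarrow> real^'m" and g :: "'a \<Rightarrow> real^'q"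
  assumes "convex_on UNIV \<psi>" and lower: "\<forall>u v. B \<le> f u + \<psi> v" and "\<sigma> > 0"
    and "y = prox UNIV \<psi> \<sigma> (h x + lm /\<^sub>R \<sigma>)"
    and "z = closest_point nonpos_orthant (g x + gm /\<^sub>R \<sigma>)"
    and "sub_obj f \<psi> h g \<sigma> lm gm x \<le> \<Phi>"
  shows "(norm (lm + \<sigma> *\<^sub>R (h x - y), gm + \<sigma> *\<^sub>R (g x - z)))\<^sup>2 \<le> 2 * (\<Phi> - B) * \<sigma>"
proof -
  have bdd: "bdd_below (range \<psi>)"
    using lower by (intro bdd_belowI2[of _ "B - f x"]) (simp add: algebra_simps)
  have "sub_obj f \<psi> h g \<sigma> lm gm x
      = f x + \<psi> y + (norm (lm + \<sigma> *\<^sub>R (h x - y), gm + \<sigma> *\<^sub>R (g x - z)))\<^sup>2 / (2 * \<sigma>)"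
    by (rule sub_obj_at_prox_closest_point) (simp_all only: assms(1,3-5) bdd)
  moreover have "B \<le> f x + \<psi> y" using lower by blast
  ultimately have "(norm (lm + \<sigma> *\<^sub>R (h x - y), gm + \<sigma> *\<^sub>R (g x - z)))\<^sup>2 / (2 * \<sigma>) \<le> \<Phi> - B"
    using \<open>sub_obj f \<psi> h g \<sigma> lm gm x \<le> \<Phi>\<close> by linarith
  then show ?thesis using \<open>\<sigma> > 0\<close> by (simp add: pos_divide_le_eq mult_ac)
qed

lemma incseq_if_keep_or_scale_up:
  fixes \<sigma> :: "nat \<Rightarrow> real"
  assumes "0 < \<sigma> 0" "1 \<le> \<rho>" and step: "\<forall>k. \<sigma> (Suc k) = \<sigma> k \<or> \<rho> * \<sigma> k \<le> \<sigma> (Suc k)"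
  shows "incseq \<sigma>"
proof -
  have mono_step: "\<sigma> k \<le> \<sigma> (Suc k)" if "0 < \<sigma> k" for k
  proof -
    have "\<sigma> k \<le> \<rho> * \<sigma> k"
      using mult_right_mono[OF \<open>1 \<le> \<rho>\<close> less_imp_le[OF that]] by simp
    then show ?thesis using step[rule_format, of k] by (metis order.trans order.refl)
  qed
  have "0 < \<sigma> k \<and> \<sigma> k \<le> \<sigma> (Suc k)" for k
    by (induction k) (use assms(1) mono_step in \<open>auto intro: less_le_trans\<close>)
  then show ?thesis by (simp add: incseq_SucI)
qed

lemma filterlim_at_top_if_incseq_unbounded:
  fixes X :: "nat \<Rightarrow> real"
  assumes "incseq X" "\<not> bdd_above (range X)"
  shows "filterlim X at_top sequentially"
  unfolding filterlim_at_top
proof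
  fix c
  obtain N where "c < X N" using assms(2) by (meson bdd_aboveI2 not_le)
  then show "eventually (\<lambda>k. c \<le> X k) sequentially"
    unfolding eventually_sequentially using assms(1)
    by (meson incseq_def less_imp_le order_trans)
qed

lemma bounded_incseq_eventually_less_factor:
  fixes \<sigma> :: "nat \<Rightarrow> real"
  assumes "incseq \<sigma>" "bdd_above (range \<sigma>)" "0 < \<sigma> 0" "1 < \<rho>"
  shows "eventually (\<lambda>k. \<sigma> (Suc k) < \<rho> * \<sigma> k) sequentially"
proof -
  have slack: "(\<rho> - 1) * \<sigma> 0 \<le> (\<rho> - 1) * \<sigma> k" for k
    using assms(1,4) by (simp add: incseq_def)
  have "\<sigma> \<longlonglongrightarrow> Sup (range \<sigma>)" using LIMSEQ_incseq_SUP assms(1,2) by blast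
  then have "(\<lambda>k. \<sigma> (Suc k) - \<sigma> k) \<longlonglongrightarrow> 0"
    using tendsto_diff[OF LIMSEQ_Suc] by fastforce
  then have "eventually (\<lambda>k. \<sigma> (Suc k) - \<sigma> k < (\<rho> - 1) * \<sigma> 0) sequentially"
    using assms(3,4) by (intro order_tendstoD(2)) auto
  then show ?thesis
  proof (rule eventually_mono)
    fix k
    assume "\<sigma> (Suc k) - \<sigma> k < (\<rho> - 1) * \<sigma> 0"
    with slack[of k] show "\<sigma> (Suc k) < \<rho> * \<sigma> k" by (simp add: algebra_simps)
  qed
qed

lemma norm_sq_le_of_scaled_step:
  fixes a r :: "'a::real_normed_vector"
  assumes "(norm a)\<^sup>2 \<le> K * s" "(norm (a + s *\<^sub>R r))\<^sup>2 \<le> K * s" "s > 0"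
  shows "(norm r)\<^sup>2 \<le> 4 * K / s"
proof -
  have "s * norm r \<le> norm (a + s *\<^sub>R r) + norm a"
    using norm_triangle_ineq4[of "a + s *\<^sub>R r" a] \<open>s > 0\<close> by simp
  then have "(s * norm r)\<^sup>2 \<le> (norm (a + s *\<^sub>R r) + norm a)\<^sup>2"
    using \<open>s > 0\<close> by (simp add: power_mono)
  also have "\<dots> \<le> 2 * ((norm (a + s *\<^sub>R r))\<^sup>2 + (norm a)\<^sup>2)"
    using sum_squares_bound[of "norm (a + s *\<^sub>R r)" "norm a"] by (simp add: power2_sum)
  also have "\<dots> \<le> 4 * K * s" using assms(1,2) by simp
  finally show ?thesis using \<open>s > 0\<close> by (simp add: power_mult_distrib field_simps power2_eq_square)
qed

lemma step_norm_sq_le_if_iterates_bounded: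
  fixes \<mu> r :: "nat \<Rightarrow> 'a::real_normed_vector" and \<sigma> :: "nat \<Rightarrow> real"
  assumes "incseq \<sigma>" "0 < \<sigma> 0"
    and update: "\<forall>k\<ge>1. \<mu> (Suc k) = \<mu> k + \<sigma> k *\<^sub>R r k"
    and bound: "\<forall>k\<ge>1. (norm (\<mu> (Suc k)))\<^sup>2 \<le> K * \<sigma> k"
    and "k \<ge> 2"
  shows "(norm (r k))\<^sup>2 \<le> 4 * K / \<sigma> k"
proof (rule norm_sq_le_of_scaled_step)
  show "0 < \<sigma> k" using assms(1,2) by (metis incseq_def le0 less_le_trans)
  have "0 \<le> K * \<sigma> 1" using bound by (metis le_refl order_trans zero_le_power2)
  moreover have "0 < \<sigma> 1" using assms(1,2) by (metis incseq_def le0 less_le_trans)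
  ultimately have "0 \<le> K" by (simp add: zero_le_mult_iff)
  have "(norm (\<mu> (Suc (k - 1))))\<^sup>2 \<le> K * \<sigma> (k - 1)"
    using bound[rule_format, of "k - 1"] \<open>k \<ge> 2\<close> by simp
  also have "\<dots> \<le> K * \<sigma> k" using \<open>0 \<le> K\<close> assms(1) by (simp add: incseq_def mult_left_mono)
  finally show "(norm (\<mu> k))\<^sup>2 \<le> K * \<sigma> k" using \<open>k \<ge> 2\<close> by (simp add: Suc_diff_Suc)
  show "(norm (\<mu> k + \<sigma> k *\<^sub>R r k))\<^sup>2 \<le> K * \<sigma> k" using update bound \<open>k \<ge> 2\<close> by simp
qed

lemma residual_tendsto_zero_under_penalty_rule:
  fixes \<mu> r :: "nat \<Rightarrow> 'a::real_normed_vector" and \<sigma> \<delta> :: "nat \<Rightarrow> real"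
  assumes "0 \<le> \<tau>" "\<tau> < 1" "1 < \<rho>" "0 < \<sigma> 0" "incseq \<sigma>"
    and update: "\<forall>k\<ge>1. \<mu> (Suc k) = \<mu> k + \<sigma> k *\<^sub>R r k"
    and bound: "\<forall>k\<ge>1. (norm (\<mu> (Suc k)))\<^sup>2 \<le> K * \<sigma> k"
    and rule: "\<forall>k\<ge>1. \<sigma> (Suc k) < \<rho> * \<sigma> k \<longrightarrow> \<delta> k \<le> \<tau> * \<delta> (k - 1)"
    and nonneg: "\<forall>k. 0 \<le> \<delta> k" and le_norm: "\<forall>k. \<delta> k \<le> norm (r k)"
  shows "\<delta> \<longlonglongrightarrow> 0"
proof (cases "bdd_above (range \<sigma>)")
  case True
  \<comment> \<open>the penalty eventually stops growing, so the safeguard forces linear decrease\<close>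
  have "eventually (\<lambda>k. \<delta> k \<le> \<tau> * \<delta> (k - 1)) sequentially"
    using bounded_incseq_eventually_less_factor[OF \<open>incseq \<sigma>\<close> True \<open>0 < \<sigma> 0\<close> \<open>1 < \<rho>\<close>]
      eventually_ge_at_top[of 1]
    by eventually_elim (use rule in auto)
  then obtain N where N: "\<forall>k\<ge>N. \<delta> k \<le> \<tau> * \<delta> (k - 1)"
    unfolding eventually_sequentially by blast
  have "norm (\<delta> (Suc k)) \<le> \<tau> * norm (\<delta> k)" if "k \<ge> N" for k
    using N[rule_format, of "Suc k"] that nonneg by simp
  then have "summable \<delta>" by (rule summable_ratio_test[OF \<open>\<tau> < 1\<close>])
  then show ?thesis by (rule summable_LIMSEQ_zero)
next
  case False
  have lim: "(\<lambda>k. sqrt (4 * K / \<sigma> k)) \<longlonglongrightarrow> 0"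
    using tendsto_real_sqrt[OF tendsto_divide_0[OF tendsto_const
        filterlim_at_top_imp_at_infinity[OF filterlim_at_top_if_incseq_unbounded[OF \<open>incseq \<sigma>\<close> False]]]]
    by simp
  have "eventually (\<lambda>k. \<delta> k \<le> sqrt (4 * K / \<sigma> k)) sequentially"
  proof (rule eventually_sequentiallyI[of 2])
    fix k :: nat
    assume "2 \<le> k"
    then have "norm (r k) \<le> sqrt (4 * K / \<sigma> k)"
      by (intro real_le_rsqrt step_norm_sq_le_if_iterates_bounded[OF \<open>incseq \<sigma>\<close> \<open>0 < \<sigma> 0\<close> update bound])
    then show "\<delta> k \<le> sqrt (4 * K / \<sigma> k)"
      using le_norm order_trans by blast
  qed
  then show ?thesis
    using nonneg by (intro tendsto_sandwich[OF _ _ tendsto_const lim]) simp_all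
qed

lemma acc_point_Pair_of_vanishing_gap:
  fixes x :: "nat \<Rightarrow> 'a::topological_space" and h :: "'a \<Rightarrow> 'b::real_normed_vector"
  assumes "acc_point x l" "continuous_on UNIV h" "(\<lambda>k. h (x k) - y k) \<longlonglongrightarrow> 0"
  shows "acc_point (\<lambda>k. (x k, y k)) (l, h l)"
proof -
  obtain r where r: "strict_mono r" and xr: "(x \<circ> r) \<longlonglongrightarrow> l"
    using assms(1) unfolding acc_point_def by blast
  have "(\<lambda>k. h (x (r k))) \<longlonglongrightarrow> h l"
    using continuous_on_tendsto_compose[OF assms(2) xr] by (simp add: o_def)
  moreover have "(\<lambda>k. h (x (r k)) - y (r k)) \<longlonglongrightarrow> 0"
    using LIMSEQ_subseq_LIMSEQ[OF assms(3) r] by (simp add: o_def)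
  ultimately have "(\<lambda>k. y (r k)) \<longlonglongrightarrow> h l"
    using tendsto_diff by fastforce
  then have "(\<lambda>k. (x (r k), y (r k))) \<longlonglongrightarrow> (l, h l)"
    using xr by (intro tendsto_Pair) (simp_all add: o_def)
  then show ?thesis
    using r unfolding acc_point_def o_def by blast
qed

lemma acc_point_in_closed:
  assumes "acc_point s l" "\<forall>k. s k \<in> S" "closed S"
  shows "l \<in> S"
  using assms closed_sequentially[of S "s \<circ> _"] unfolding acc_point_def by auto

lemma acc_point_exists_if_compact:
  fixes s :: "nat \<Rightarrow> 'a::metric_space"
  assumes "compact (UNIV :: 'a set)"
  shows "\<exists>l. acc_point s l"
  using compact_imp_seq_compact[OF assms] unfolding seq_compact_def acc_point_def by blast

lemma alm_max_residual_tendsto_zero: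
  fixes h1 :: "'a \<Rightarrow> real^'m" and h2 :: "'a \<Rightarrow> real^'q" and \<psi> :: "real^'m \<Rightarrow> real"
    and x :: "nat \<Rightarrow> 'a" and y lam :: "nat \<Rightarrow> real^'m" and z gam :: "nat \<Rightarrow> real^'q"
    and sig delta :: "nat \<Rightarrow> real"
  assumes convex_psi: "convex_on UNIV \<psi>" and B: "\<forall>u v. B \<le> f u + \<psi> v"
    and sig0: "0 < sig 0" and sig1: "sig 1 = sig 0"
    and tau: "0 \<le> \<tau>" "\<tau> < 1" and rho: "1 < \<rho>"
    and delta_def: "\<forall>k. delta k = max (norm (h1 (x k) - y k)) (norm (h2 (x k) - z k))"
    and sub_obj_le: "\<forall>k\<ge>1. sub_obj f \<psi> h1 h2 (sig k) (lam k) (gam k) (x k) \<le> \<Phi>"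
    and step_ii: "\<forall>k\<ge>1. y k = prox UNIV \<psi> (sig k) (h1 (x k) + lam k /\<^sub>R sig k)
                     \<and> z k = closest_point nonpos_orthant (h2 (x k) + gam k /\<^sub>R sig k)"
    and step_iii: "\<forall>k\<ge>1. lam (Suc k) = lam k + sig k *\<^sub>R (h1 (x k) - y k)
                      \<and> gam (Suc k) = gam k + sig k *\<^sub>R (h2 (x k) - z k)"
    and step_iv: "\<forall>k\<ge>1. sig (Suc k) =
                    (if delta k \<le> \<tau> * delta (k - 1) then sig k else max (\<rho> * sig k) (M k))"
  shows "delta \<longlonglongrightarrow> 0"
proof -
  have "sig (Suc k) = sig k \<or> \<rho> * sig k \<le> sig (Suc k)" for k
  proof (cases "k = 0")
    case False
    then show ?thesis
      using step_iv[rule_format, of k] by (cases "delta k \<le> \<tau> * delta (k - 1)") simp_all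
  qed (use sig1 in simp)
  then have inc: "incseq sig"
    using sig0 rho by (intro incseq_if_keep_or_scale_up[of sig \<rho>]) auto
  have sig_pos: "0 < sig k" for k using inc sig0 by (metis incseq_def le0 less_le_trans)
  define r where "r k = (h1 (x k) - y k, h2 (x k) - z k)" for k
  show ?thesis
  proof (rule residual_tendsto_zero_under_penalty_rule[OF tau rho sig0 inc])
    show "\<forall>k\<ge>1. (lam (Suc k), gam (Suc k)) = (lam k, gam k) + sig k *\<^sub>R r k"
      using step_iii by (simp add: r_def)
    show "\<forall>k\<ge>1. (norm (lam (Suc k), gam (Suc k)))\<^sup>2 \<le> 2 * (\<Phi> - B) * sig k"
    proof (intro allI impI)
      fix k :: nat
      assume "1 \<le> k"
      then show "(norm (lam (Suc k), gam (Suc k)))\<^sup>2 \<le> 2 * (\<Phi> - B) * sig k"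
        using updated_multiplier_norm_sq_le[OF convex_psi B sig_pos,
            where h = h1 and g = h2 and x = "x k" and lm = "lam k" and gm = "gam k"
              and y = "y k" and z = "z k" and \<Phi> = \<Phi>]
          sub_obj_le step_ii step_iii
        by simp
    qed
    show "\<forall>k\<ge>1. sig (Suc k) < \<rho> * sig k \<longrightarrow> delta k \<le> \<tau> * delta (k - 1)"
    proof (intro allI impI)
      fix k :: nat
      assume "1 \<le> k" "sig (Suc k) < \<rho> * sig k"
      then show "delta k \<le> \<tau> * delta (k - 1)"
        using step_iv[rule_format, of k] by (cases "delta k \<le> \<tau> * delta (k - 1)") simp_all
    qed
    show "\<forall>k. 0 \<le> delta k" "\<forall>k. delta k \<le> norm (r k)"
      using delta_def by (simp_all add: r_def le_max_iff_disj norm_fst_le norm_snd_le)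
  qed
qed

theorem theorem3p1:
  fixes f :: "'a::complete_space \<Rightarrow> real"
    and h1 :: "'a \<Rightarrow> real^'m" and h2 :: "'a \<Rightarrow> real^'q"
    and \<psi> :: "real^'m \<Rightarrow> real"
    and gradnorm :: "('a \<Rightarrow> real) \<Rightarrow> 'a \<Rightarrow> real"
    and x :: "nat \<Rightarrow> 'a" and y lam :: "nat \<Rightarrow> real^'m" and z gam :: "nat \<Rightarrow> real^'q"
    and sig eps delta :: "nat \<Rightarrow> real"
    and \<alpha> \<tau> \<rho> \<Phi> :: real and x_feas :: 'a
  assumes cont_f: "continuous_on UNIV f"
    and cont_h1: "continuous_on UNIV h1"
    and cont_h2: "continuous_on UNIV h2"
    and convex_psi: "convex_on UNIV \<psi>"
    and bdd: "\<exists>B. \<forall>u v. B \<le> f u + \<psi> v"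
    \<comment> \<open>parameters\<close>
    and gam0: "\<forall>i. gam 0 $ i \<ge> 0"
    and sig0: "sig 0 > 0"
    and alpha: "0 < \<alpha>" "\<alpha> < 1"
    and tau: "0 < \<tau>" "\<tau> < 1"
    and rho: "\<rho> > 1"
    and eps_nonneg: "\<forall>k. eps k \<ge> 0"
    and eps_lim: "eps \<longlonglongrightarrow> 0"
    \<comment> \<open>initialisation\<close>
    and y0: "y 0 = prox UNIV \<psi> (sig 0) (h1 (x 0) + lam 0 /\<^sub>R sig 0)"
    and z0: "z 0 = closest_point nonpos_orthant (h2 (x 0) + gam 0 /\<^sub>R sig 0)"
    and feas: "h2 x_feas \<in> nonpos_orthant"
    and Phi: "\<Phi> \<ge> f x_feas + \<psi> (h1 x_feas)"
             "\<Phi> \<ge> aug_lag f \<psi> h1 h2 (sig 0) (x 0) (y 0) (z 0) (lam 0) (gam 0)"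
    \<comment> \<open>at k = 1 the current multipliers/penalty are the initial ones\<close>
    and init1: "lam 1 = lam 0" "gam 1 = gam 0" "sig 1 = sig 0"
    \<comment> \<open>delta_k for all k (including k = 0)\<close>
    and delta_def: "\<forall>k. delta k = max (norm (h1 (x k) - y k)) (norm (h2 (x k) - z k))"
    \<comment> \<open>iterations k \<ge> 1\<close>
    and step_i: "\<forall>k\<ge>1. gradnorm (sub_obj f \<psi> h1 h2 (sig k) (lam k) (gam k)) (x k) < eps k
                    \<and> sub_obj f \<psi> h1 h2 (sig k) (lam k) (gam k) (x k) \<le> \<Phi>"
    and step_ii: "\<forall>k\<ge>1. y k = prox UNIV \<psi> (sig k) (h1 (x k) + lam k /\<^sub>R sig k)
                     \<and> z k = closest_point nonpos_orthant (h2 (x k) + gam k /\<^sub>R sig k)"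
    and step_iii: "\<forall>k\<ge>1. lam (Suc k) = lam k + sig k *\<^sub>R (h1 (x k) - y k)
                      \<and> gam (Suc k) = gam k + sig k *\<^sub>R (h2 (x k) - z k)"
    and step_iv: "\<forall>k\<ge>1. sig (Suc k) =
                    (if delta k \<le> \<tau> * delta (k - 1) then sig k
                     else max (\<rho> * sig k)
                            (max (norm (lam (Suc k)) powr (1 + \<alpha>)) (norm (gam (Suc k)) powr (1 + \<alpha>))))"
  shows "((\<lambda>k. norm (h1 (x k) - y k) + norm (h2 (x k) - z k)) \<longlonglongrightarrow> 0)
       \<and> (\<forall>xs. acc_point x xs \<longrightarrow>
            acc_point (\<lambda>k. (x k, y k, z k)) (xs, h1 xs, h2 xs) \<and> h2 xs \<in> nonpos_orthant)
       \<and> (compact (UNIV :: 'a set) \<longrightarrow> (\<exists>xs. acc_point x xs))"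
proof -
  \<comment> \<open>of step (i) only the bound L_k(x_k) \<le> Phi is needed; neither the gradient condition
    nor the lower bounds on Phi enter the argument\<close>
  obtain B where B: "\<forall>u v. B \<le> f u + \<psi> v" using bdd by blast
  have "delta \<longlonglongrightarrow> 0"
    using step_i by (intro alm_max_residual_tendsto_zero[where \<Phi> = \<Phi>, OF convex_psi B sig0 init1(3)
          less_imp_le[OF tau(1)] tau(2) rho delta_def _ step_ii step_iii step_iv]) simp
  then have two_delta: "(\<lambda>k. 2 * delta k) \<longlonglongrightarrow> 0"
    using tendsto_mult[OF tendsto_const, of delta 0 sequentially 2] by simp
  have gap: "(\<lambda>k. norm (h1 (x k) - y k) + norm (h2 (x k) - z k)) \<longlonglongrightarrow> 0"
    by (rule tendsto_sandwich[OF _ _ tendsto_const two_delta]) (use delta_def in \<open>simp_all add: max_def\<close>)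
  have "(\<lambda>k. (h1 (x k), h2 (x k)) - (y k, z k)) \<longlonglongrightarrow> 0"
    by (rule tendsto_norm_zero_cancel, rule tendsto_sandwich[OF _ _ tendsto_const gap])
      (simp_all add: norm_Pair_le)
  then have acc: "acc_point (\<lambda>k. (x k, y k, z k)) (xs, h1 xs, h2 xs)" if "acc_point x xs" for xs
    using acc_point_Pair_of_vanishing_gap[OF that continuous_on_Pair[OF cont_h1 cont_h2]] by simp
  have "z k \<in> nonpos_orthant" for k
  proof (cases "k = 0")
    case False
    then have "z k = closest_point nonpos_orthant (h2 (x k) + gam k /\<^sub>R sig k)"
      using step_ii by simp
    then show ?thesis by (simp add: closest_point_in_set closed_nonpos_orthant nonpos_orthant_nonempty)
  qed (simp add: z0 closest_point_in_set closed_nonpos_orthant nonpos_orthant_nonempty)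
  then have feasible: "h2 xs \<in> nonpos_orthant" if "acc_point x xs" for xs
    using acc_point_in_closed[OF acc[OF that], of "UNIV \<times> UNIV \<times> nonpos_orthant"]
    by (simp add: closed_Times closed_nonpos_orthant)
  show ?thesis
    using gap acc feasible acc_point_exists_if_compact[of x] by simp
qed

end
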